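(* Let $n,k,n',k'$ be integers with $k<n<2k-1$, $n/k=n'/k'$, and $k,k'$ both even. Then there is a homomorphism $H_{n,k}\to H_{n',k'}$ if and only if $n'$ and $k'$ are integer multiples of $n$ and $k$, respectively. Moreover, any homomorphism $H_{n,k}\to H_{n',k'}$ is an isomorphism from $H_{n,k}$ to an induced subgraph of $H_{n',k'}$.
   Context: For integers $m\ge j$ with $j$ even, $H_{m,j}$ is the graph whose vertices are the even-weight elements of $\mathbb{Z}_2^m$, with $x\sim y$ iff $x$ and $y$ differ in exactly $j$ coordinates. A homomorphism is an adjacency-preserving map between vertex sets. *)

theory Defs
  imports Complex_Main "HOL-Library.FuncSet"
begin

text \<open>Elements of Z_2^m are identified with subsets of {0..<m} (their supports).
  The Hamming weight is the cardinality, and two vectors differ in exactly the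
  coordinates of the symmetric difference of their supports.\<close>

definition H_verts :: "nat \<Rightarrow> nat set set" where
  "H_verts m = {S. S \<subseteq> {..<m} \<and> even (card S)}"

definition H_adj :: "nat \<Rightarrow> nat set \<Rightarrow> nat set \<Rightarrow> bool" where
  "H_adj j S T \<longleftrightarrow> card ((S - T) \<union> (T - S)) = j"

definition H_hom :: "nat \<Rightarrow> nat \<Rightarrow> nat \<Rightarrow> nat \<Rightarrow> (nat set \<Rightarrow> nat set) \<Rightarrow> bool" where
  "H_hom m j m' j' f \<longleftrightarrow>
     f \<in> H_verts m \<rightarrow> H_verts m' \<and>
     (\<forall>S\<in>H_verts m. \<forall>T\<in>H_verts m. H_adj j S T \<longrightarrow> H_adj j' (f S) (f T))"

definition H_induced_embedding :: "nat \<Rightarrow> nat \<Rightarrow> nat \<Rightarrow> nat \<Rightarrow> (nat set \<Rightarrow> nat set) \<Rightarrow> bool" where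
  "H_induced_embedding m j m' j' f \<longleftrightarrow>
     f \<in> H_verts m \<rightarrow> H_verts m' \<and> inj_on f (H_verts m) \<and>
     (\<forall>S\<in>H_verts m. \<forall>T\<in>H_verts m. H_adj j' (f S) (f T) \<longleftrightarrow> H_adj j S T)"

end

theory Submission
  imports Defs "HOL-Computational_Algebra.Polynomial"
begin

text \<open>
  Write vectors of \<open>Z_2^n\<close> as subsets of \<open>{..<n}\<close>. For a homomorphism \<open>f\<close> and an output
  coordinate \<open>j < n'\<close>, let \<open>\<psi>\<^sub>j x = (-1)^[j \<in> f x]\<close> on even sets and \<open>0\<close> on odd ones. Since \<open>f\<close>
  maps every edge to a pair at distance \<open>k'\<close> and \<open>n'/k' = n/k\<close>, the quadratic forms of the Cayley
  graph generated by the \<open>k\<close>-sets add up to \<open>n' \<lambda> |H_verts n|\<close> with \<open>\<lambda> = C(n,k) (n - 2k) / n\<close>.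
  In the range \<open>k < n < 2k - 1\<close>, \<open>\<lambda>\<close> is the least eigenvalue, attained only on the Fourier levels
  \<open>1\<close> and \<open>n - 1\<close>: via Krawtchouk reciprocity this reduces to the coefficient bound
  \<open>|[X^w] (1 - X)^d (1 - X^2)^m| < d C(n,w)/n\<close> for \<open>2 \<le> w \<le> n - 2\<close>, proved by induction on \<open>m\<close>.
  So every \<open>\<psi>\<^sub>j\<close> is an extremal vector, and a \<open>\<plusminus>1\<close>-valued function on the even sets supported
  on those levels is a signed dictator: output coordinate \<open>j\<close> copies some input coordinate.
  Adjacency of \<open>{}\<close> to all \<open>k\<close>-sets forces every input coordinate to be copied the same number
  \<open>t\<close> of times, so \<open>n' = t n\<close>, \<open>k' = t k\<close> and \<open>f\<close> multiplies all distances by \<open>t\<close>; conversely the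
  \<open>t\<close>-fold blow-up of coordinates is a homomorphism.
\<close>

section \<open>Binomial coefficients and the polynomials \<open>(1 - X)^d (1 - X^2)^m\<close>\<close>

lemma binomial_Suc_ratio: "Suc k * (n choose Suc k) = (n - k) * (n choose k)"
  by (simp only: binomial_absorption binomial_absorb_comp)

lemma binomial_neighbours_less:
  assumes "j + 2 \<le> n"
  shows "real (n choose (j + 2)) + real (n choose j) < real n * real (n choose (j + 1))"
proof -
  define a where "a = real (n choose (j + 2))"
  define b where "b = real (n choose (j + 1))"
  define c where "c = real (n choose j)"
  have ab: "real (j + 2) * a = real (n - (j + 1)) * b"
    using binomial_Suc_ratio[of "j + 1" n] unfolding a_def b_def
    by (simp only: of_nat_mult[symmetric] Suc_eq_plus1 add.assoc one_add_one)
  have bc: "real (j + 1) * b = real (n - j) * c"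
    using binomial_Suc_ratio[of j n] unfolding b_def c_def
    by (simp only: of_nat_mult[symmetric] Suc_eq_plus1)
  have "2 * a \<le> real (j + 2) * a" "2 * c \<le> real (n - j) * c"
    using assms by (auto intro!: mult_right_mono simp: a_def c_def)
  moreover have "real (n - (j + 1)) + real (j + 1) = real n" using assms by simp
  ultimately have "2 * (a + c) \<le> real n * b" using ab bc by (simp add: algebra_simps)
  moreover have "0 < real n * b" using assms by (simp add: b_def)
  ultimately show ?thesis by (simp add: a_def b_def c_def)
qed

lemma real_choose_two: "real (n choose 2) = real n * (real n - 1) / 2"
proof -
  have "2 * (n choose 2) = n * (n - 1)" using times_binomial_minus1_eq[of 2 n] by simp
  then have "2 * real (n choose 2) = real n * real (n - 1)" by (metis of_nat_mult of_nat_numeral)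
  then show ?thesis by (cases n) auto
qed

text \<open>With \<open>n = d + 2 m\<close> and \<open>k = d + m\<close> this is the coefficient of \<open>X\<^sup>w\<close> in
  \<open>(1 - X)^k (1 + X)^(n - k)\<close> (lemma \<open>krawtchouk_eq_dual_kraw\<close>), factored so that \<open>m\<close> can be inducted on.\<close>

definition dual_kraw :: "nat \<Rightarrow> nat \<Rightarrow> nat \<Rightarrow> int" where
  "dual_kraw d m w = coeff ([:1,-1:] ^ d * [:1,0,-1:] ^ m) w"

lemma coeff_mult_one_minus_X:
  "coeff (p * [:1,-1:]) w = coeff p w - (if 1 \<le> w then coeff p (w - 1) else (0::'a::comm_ring_1))"
proof -
  have "p * [:1,-1:] = p - monom 1 1 * p" by (simp add: monom_altdef algebra_simps)
  then show ?thesis by (simp add: coeff_monom_mult)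
qed

lemma coeff_mult_one_minus_X2:
  "coeff (p * [:1,0,-1:]) w = coeff p w - (if 2 \<le> w then coeff p (w - 2) else (0::'a::comm_ring_1))"
proof -
  have "p * [:1,0,-1:] = p - monom 1 2 * p"
    by (simp add: monom_altdef algebra_simps power2_eq_square)
  then show ?thesis by (simp add: coeff_monom_mult)
qed

lemma coeff_one_minus_X_power:
  "coeff ([:1,-1:] ^ d) w = (-1) ^ w * (of_nat (d choose w) :: 'a::comm_ring_1)"
proof (induction d arbitrary: w)
  case 0
  then show ?case by (cases w) auto
next
  case (Suc d)
  have "coeff ([:1,-1:] ^ Suc d) w
      = coeff ([:1,-1:] ^ d) w - (if 1 \<le> w then coeff ([:1,-1:] ^ d) (w - 1) else (0::'a))"
    by (metis coeff_mult_one_minus_X power_Suc2)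
  then show ?case using Suc by (cases w) (auto simp: algebra_simps)
qed

lemma dual_kraw_0: "dual_kraw d 0 w = (-1) ^ w * int (d choose w)"
  by (simp add: dual_kraw_def coeff_one_minus_X_power)

lemma dual_kraw_Suc:
  "dual_kraw d (Suc m) w = dual_kraw d m w - (if 2 \<le> w then dual_kraw d m (w - 2) else 0)"
proof -
  have "[:1,-1:] ^ d * [:1,0,-1:] ^ Suc m = ([:1,-1:] ^ d * [:1,0,-1:] ^ m) * [:1::int,0,-1:]"
    by (simp add: algebra_simps)
  then show ?thesis unfolding dual_kraw_def by (simp only: coeff_mult_one_minus_X2)
qed

lemma dual_kraw_at_0: "dual_kraw d m 0 = 1"
  by (simp add: dual_kraw_def coeff_mult_0 coeff_0_power)

lemma dual_kraw_above_degree: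
  assumes "d + 2 * m < w" shows "dual_kraw d m w = 0"
proof -
  have "degree ([:1,-1:] ^ d :: int poly) \<le> d"
    using degree_power_le[of "[:1,-1:] :: int poly" d] by simp
  moreover have "degree ([:1,0,-1:] ^ m :: int poly) \<le> 2 * m"
    using degree_power_le[of "[:1,0,-1:] :: int poly" m] by simp
  ultimately have "degree ([:1,-1:] ^ d * [:1,0,-1:] ^ m :: int poly) \<le> d + 2 * m"
    using degree_mult_le[of "[:1,-1:] ^ d :: int poly" "[:1,0,-1:] ^ m"] by linarith
  then show ?thesis unfolding dual_kraw_def using assms by (intro coeff_eq_0) simp
qed

lemma dual_kraw_top: "dual_kraw d m (d + 2 * m) = (-1) ^ (d + m)"
proof (induction m)
  case 0
  then show ?case by (simp add: dual_kraw_0)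
next
  case (Suc m)
  have "dual_kraw d (Suc m) (d + 2 * Suc m) = dual_kraw d m (d + 2 * m + 2) - dual_kraw d m (d + 2 * m)"
    by (simp add: dual_kraw_Suc)
  then show ?case using Suc by (simp add: dual_kraw_above_degree)
qed

text \<open>The middle value \<open>d C(n,w)/n\<close> is exact at
  \<open>w = 1\<close> and \<open>w = n - 1\<close> and strict for \<open>2 \<le> w \<le> n - 2\<close> once \<open>m > 0\<close> (lemma \<open>abs_dual_kraw_less\<close>).\<close>

definition dual_kraw_bound :: "nat \<Rightarrow> nat \<Rightarrow> nat \<Rightarrow> real" where
  "dual_kraw_bound d n w =
     (if w = 0 \<or> w = n then 1 else if w < n then real d * real (n choose w) / real n else 0)"

lemma dual_kraw_bound_symmetric:
  assumes "w \<le> n" shows "dual_kraw_bound d n (n - w) = dual_kraw_bound d n w"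
  using assms binomial_symmetric[OF assms] by (auto simp: dual_kraw_bound_def)

lemma dual_kraw_bound_1: "2 \<le> n \<Longrightarrow> dual_kraw_bound d n 1 = real d"
  by (simp add: dual_kraw_bound_def)

lemma dual_kraw_bound_end_step:
  assumes "2 \<le> d" "2 \<le> n"
  shows "dual_kraw_bound d n 2 + dual_kraw_bound d n 0 < dual_kraw_bound d (n + 2) 2"
proof -
  have "real ((n + 2) choose 2) = (real n + 2) * (real n + 1) / 2"
    by (simp only: real_choose_two) (simp add: algebra_simps)
  then have rhs: "dual_kraw_bound d (n + 2) 2 = real d * (real n + 1) / 2"
    using assms by (simp add: dual_kraw_bound_def field_simps)
  show ?thesis
  proof (cases "n = 2")
    case True
    then have "dual_kraw_bound d n 2 + dual_kraw_bound d n 0 = 2" by (simp add: dual_kraw_bound_def)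
    then show ?thesis using assms True unfolding rhs by simp
  next
    case False
    then have "dual_kraw_bound d n 2 = real d * (real n - 1) / 2"
      using assms by (simp add: dual_kraw_bound_def real_choose_two)
    moreover have "dual_kraw_bound d n 0 = 1" by (simp add: dual_kraw_bound_def)
    ultimately show ?thesis using assms unfolding rhs by (simp add: field_simps)
  qed
qed

lemma dual_kraw_bound_inner_step:
  assumes "0 < d" "0 < j" "j + 2 < n"
  shows "dual_kraw_bound d n (j + 2) + dual_kraw_bound d n j < dual_kraw_bound d (n + 2) (j + 2)"
proof -
  define a where "a = real (n choose (j + 2)) + real (n choose j)"
  define b where "b = real (n choose (j + 1))"
  have pascal: "real ((n + 2) choose (j + 2)) = a + 2 * b"
    by (simp add: a_def b_def numeral_2_eq_2)
  have "(real n + 2) * a < real n * (a + 2 * b)"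
    using binomial_neighbours_less[of j n] assms by (simp add: a_def b_def algebra_simps)
  then have "a / real n < (a + 2 * b) / (real n + 2)"
    using assms by (simp add: field_simps)
  then have "real d * a / real n < real d * (a + 2 * b) / (real n + 2)"
    using assms by (simp add: mult_strict_left_mono flip: times_divide_eq_right)
  moreover have "dual_kraw_bound d n (j + 2) + dual_kraw_bound d n j = real d * a / real n"
    using assms by (simp add: dual_kraw_bound_def a_def add_divide_distrib distrib_left)
  moreover have "dual_kraw_bound d (n + 2) (j + 2) = real d * (a + 2 * b) / (real n + 2)"
    using assms pascal unfolding dual_kraw_bound_def by simp
  ultimately show ?thesis by simp
qed

lemma dual_kraw_bound_step:
  assumes "2 \<le> d" "2 \<le> n" "j + 2 \<le> n"
  shows "dual_kraw_bound d n (j + 2) + dual_kraw_bound d n j < dual_kraw_bound d (n + 2) (j + 2)"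
proof -
  consider "j = 0" | "j + 2 = n" | "0 < j" "j + 2 < n" using assms by linarith
  then show ?thesis
  proof cases
    case 1
    then show ?thesis using dual_kraw_bound_end_step[OF assms(1,2)] by (simp only: add_0)
  next
    case 2
    have "dual_kraw_bound d n (j + 2) = dual_kraw_bound d n 0"
      "dual_kraw_bound d n j = dual_kraw_bound d n 2"
      "dual_kraw_bound d (n + 2) (j + 2) = dual_kraw_bound d (n + 2) 2"
      using dual_kraw_bound_symmetric[of 0 n d] dual_kraw_bound_symmetric[of 2 n d]
        dual_kraw_bound_symmetric[of 2 "n + 2" d] 2 by auto
    then show ?thesis using dual_kraw_bound_end_step[OF assms(1,2)] by simp
  next
    case 3
    then show ?thesis using dual_kraw_bound_inner_step[of d j n] assms by simp
  qed
qed

lemma abs_dual_kraw_Suc_less: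
  assumes "2 \<le> d" "j + 2 \<le> d + 2 * m"
    and IH: "\<And>w. \<bar>real_of_int (dual_kraw d m w)\<bar> \<le> dual_kraw_bound d (d + 2 * m) w"
  shows "\<bar>real_of_int (dual_kraw d (Suc m) (j + 2))\<bar> < dual_kraw_bound d (d + 2 * Suc m) (j + 2)"
proof -
  have "\<bar>real_of_int (dual_kraw d (Suc m) (j + 2))\<bar>
      = \<bar>real_of_int (dual_kraw d m (j + 2)) - real_of_int (dual_kraw d m j)\<bar>"
    by (simp add: dual_kraw_Suc)
  also have "\<dots> \<le> dual_kraw_bound d (d + 2 * m) (j + 2) + dual_kraw_bound d (d + 2 * m) j"
    using IH[of "j + 2"] IH[of j] by linarith
  also have "\<dots> < dual_kraw_bound d (d + 2 * m + 2) (j + 2)"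
    using assms by (intro dual_kraw_bound_step) auto
  finally show ?thesis by (simp add: algebra_simps)
qed

lemma abs_dual_kraw_le:
  assumes "2 \<le> d"
  shows "\<bar>real_of_int (dual_kraw d m w)\<bar> \<le> dual_kraw_bound d (d + 2 * m) w"
proof (induction m arbitrary: w)
  case 0
  then show ?case
    using assms by (auto simp: dual_kraw_0 dual_kraw_bound_def abs_mult binomial_eq_0)
next
  case (Suc m)
  define n where "n = d + 2 * m"
  have n2: "2 \<le> n" and n_Suc: "d + 2 * Suc m = n + 2" using assms by (auto simp: n_def)
  consider "w = 0" | "w = 1" | j where "w = j + 2" "j + 2 \<le> n" | "w = n + 1" | "w = n + 2"
    | "n + 2 < w"
  proof -
    have "w = 0 \<or> w = 1 \<or> (w = (w - 2) + 2 \<and> (w - 2) + 2 \<le> n) \<or> w = n + 1 \<or> w = n + 2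
      \<or> n + 2 < w" by arith
    then show thesis using that by blast
  qed
  then show ?case
  proof cases
    case 1
    then show ?thesis by (simp add: dual_kraw_at_0 dual_kraw_bound_def)
  next
    case 2
    then have "dual_kraw d (Suc m) w = dual_kraw d m 1" by (simp add: dual_kraw_Suc)
    moreover have "dual_kraw_bound d (n + 2) 1 = dual_kraw_bound d n 1"
      using n2 dual_kraw_bound_1[of n d] dual_kraw_bound_1[of "n + 2" d] by simp
    ultimately show ?thesis using Suc[of 1] 2 n_Suc by (simp add: n_def)
  next
    case (3 j)
    then show ?thesis using abs_dual_kraw_Suc_less[OF assms _ Suc] n_def by fastforce
  next
    case 4
    then have "dual_kraw d (Suc m) w = - dual_kraw d m (n - 1)"
      using n2 by (simp add: dual_kraw_Suc dual_kraw_above_degree n_def)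
    moreover have "dual_kraw_bound d (n + 2) (n + 1) = dual_kraw_bound d n (n - 1)"
      using n2 dual_kraw_bound_symmetric[of 1 "n + 2" d] dual_kraw_bound_symmetric[of 1 n d]
        dual_kraw_bound_1[of n d] dual_kraw_bound_1[of "n + 2" d] by simp
    ultimately show ?thesis using Suc[of "n - 1"] 4 n_Suc by (simp add: n_def)
  next
    case 5
    then have "dual_kraw d (Suc m) w = - dual_kraw d m n"
      by (simp add: dual_kraw_Suc dual_kraw_above_degree n_def)
    then show ?thesis using Suc[of n] 5 n_Suc by (simp add: dual_kraw_bound_def n_def)
  next
    case 6
    then show ?thesis using n_Suc by (simp add: dual_kraw_above_degree dual_kraw_bound_def)
  qed
qed

lemma abs_dual_kraw_less:
  assumes "2 \<le> d" "0 < m" "2 \<le> w" "w + 2 \<le> d + 2 * m"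
  shows "\<bar>real_of_int (dual_kraw d m w)\<bar> < real d * real ((d + 2 * m) choose w) / real (d + 2 * m)"
proof -
  obtain m' j where m': "m = Suc m'" and j: "w = j + 2"
    using assms by (intro that[of "m - 1" "w - 2"]) auto
  have "\<bar>real_of_int (dual_kraw d m w)\<bar> < dual_kraw_bound d (d + 2 * m) w"
    unfolding m' j using assms m' j by (intro abs_dual_kraw_Suc_less abs_dual_kraw_le) auto
  then show ?thesis using assms by (simp add: dual_kraw_bound_def)
qed

section \<open>Krawtchouk values and the least eigenvalue\<close>

definition chi :: "nat set \<Rightarrow> nat set \<Rightarrow> real" where
  "chi a x = (-1) ^ card (a \<inter> x)"

definition ksubsets :: "nat \<Rightarrow> nat \<Rightarrow> nat set set" where
  "ksubsets n k = {D. D \<subseteq> {..<n} \<and> card D = k}"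

definition krawtchouk :: "nat \<Rightarrow> nat \<Rightarrow> nat \<Rightarrow> real" where
  "krawtchouk n k w = of_int (coeff ([:1,-1:] ^ w * [:1,1:] ^ (n - w)) k)"

text \<open>The eigenvalue \<open>\<Sum>D\<in>ksubsets n k. chi a D\<close> at a set \<open>a\<close> with \<open>card a = 1\<close>.\<close>

definition min_eigenvalue :: "nat \<Rightarrow> nat \<Rightarrow> real" where
  "min_eigenvalue n k = real (n choose k) * (real n - 2 * real k) / real n"

lemma chi_commute: "chi a x = chi x a"
  by (simp add: chi_def Int_commute)

lemma card_ksubsets: "card (ksubsets n k) = n choose k"
  unfolding ksubsets_def using n_subsets[of "{..<n}" k] by simp

lemma ksubsets_subset_Pow: "ksubsets n k \<subseteq> Pow {..<n}"
  by (auto simp: ksubsets_def)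

lemma sum_Pow_chi_monom:
  assumes "finite U"
  shows "(\<Sum>D\<in>Pow U. monom ((-1) ^ card (a \<inter> D)) (card D))
      = [:1,-1:] ^ card (U \<inter> a) * [:1::int,1:] ^ card (U - a)"
  using assms
proof (induction U rule: finite_induct)
  case empty
  then show ?case by simp
next
  case (insert x U)
  define g where "g D = monom ((-1::int) ^ card (a \<inter> D)) (card D)" for D
  define s where "s = (if x \<in> a then -1 else (1::int))"
  have g_insert: "g (insert x D) = [:0, s:] * g D" if "D \<in> Pow U" for D
  proof -
    have "finite D" "x \<notin> D" using that insert finite_subset by auto
    then show ?thesis
      by (auto simp: g_def s_def Int_insert_right monom_altdef algebra_simps power_add)
  qed
  have "(\<Sum>D\<in>Pow (insert x U). g D) = (\<Sum>D\<in>Pow U. g D) + (\<Sum>D\<in>insert x ` Pow U. g D)"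
    unfolding Pow_insert using insert by (intro sum.union_disjoint) auto
  also have "(\<Sum>D\<in>insert x ` Pow U. g D) = (\<Sum>D\<in>Pow U. g (insert x D))"
    using insert by (subst sum.reindex) (auto simp: inj_on_def)
  also have "\<dots> = [:0, s:] * (\<Sum>D\<in>Pow U. g D)"
    using g_insert by (simp add: sum_distrib_left)
  finally have "(\<Sum>D\<in>Pow (insert x U). g D) = (\<Sum>D\<in>Pow U. g D) * [:1, s:]"
    by (simp add: algebra_simps)
  moreover have "insert x U \<inter> a = (if x \<in> a then insert x (U \<inter> a) else U \<inter> a)"
    "insert x U - a = (if x \<in> a then U - a else insert x (U - a))" by auto
  ultimately show ?case
    using insert by (simp add: g_def s_def algebra_simps)
qed

lemma sum_ksubsets_chi:
  assumes "a \<subseteq> {..<n}"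
  shows "(\<Sum>D\<in>ksubsets n k. chi a D) = krawtchouk n k (card a)"
proof -
  have "{..<n} \<inter> a = a" "card ({..<n} - a) = n - card a"
    using assms by (auto simp: card_Diff_subset finite_subset)
  then have gen: "(\<Sum>D\<in>Pow {..<n}. monom ((-1::int) ^ card (a \<inter> D)) (card D))
      = [:1,-1:] ^ card a * [:1,1:] ^ (n - card a)"
    using sum_Pow_chi_monom[of "{..<n}" a] by simp
  have "krawtchouk n k (card a)
      = of_int (\<Sum>D\<in>Pow {..<n}. coeff (monom ((-1::int) ^ card (a \<inter> D)) (card D)) k)"
    unfolding krawtchouk_def gen[symmetric] coeff_sum ..
  also have "\<dots> = of_int (\<Sum>D\<in>Pow {..<n}. if card D = k then (-1::int) ^ card (a \<inter> D) else 0)"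
    by (simp add: coeff_monom)
  also have "\<dots> = of_int (\<Sum>D\<in>{D\<in>Pow {..<n}. card D = k}. (-1::int) ^ card (a \<inter> D))"
    by (subst sum.inter_filter) auto
  also have "{D\<in>Pow {..<n}. card D = k} = ksubsets n k" unfolding ksubsets_def by auto
  finally show ?thesis by (simp add: chi_def)
qed

lemma krawtchouk_reciprocity:
  "real (n choose w) * krawtchouk n k w = real (n choose k) * krawtchouk n w k"
proof -
  have "(\<Sum>A\<in>ksubsets n w. \<Sum>D\<in>ksubsets n k. chi A D) = (\<Sum>A\<in>ksubsets n w. krawtchouk n k w)"
    by (intro sum.cong refl) (use sum_ksubsets_chi in \<open>auto simp: ksubsets_def\<close>)
  then have "real (n choose w) * krawtchouk n k w = (\<Sum>A\<in>ksubsets n w. \<Sum>D\<in>ksubsets n k. chi A D)"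
    by (simp add: card_ksubsets)
  also have "\<dots> = (\<Sum>D\<in>ksubsets n k. \<Sum>A\<in>ksubsets n w. chi D A)"
    by (subst sum.swap) (simp add: chi_commute)
  also have "\<dots> = (\<Sum>D\<in>ksubsets n k. krawtchouk n w k)"
    by (intro sum.cong refl) (use sum_ksubsets_chi in \<open>auto simp: ksubsets_def\<close>)
  also have "\<dots> = real (n choose k) * krawtchouk n w k"
    by (simp add: card_ksubsets)
  finally show ?thesis .
qed

lemma krawtchouk_eq_dual_kraw:
  assumes "k \<le> n" "n \<le> 2 * k"
  shows "krawtchouk n w k = of_int (dual_kraw (2 * k - n) (n - k) w)"
proof -
  have "[:1,-1:] ^ k * [:1::int,1:] ^ (n - k) = [:1,-1:] ^ (2 * k - n) * ([:1,-1:] * [:1,1:]) ^ (n - k)"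
  proof -
    have "k = (2 * k - n) + (n - k)" using assms by simp
    then have "[:1::int,-1:] ^ k = [:1,-1:] ^ (2 * k - n) * [:1,-1:] ^ (n - k)"
      by (metis power_add)
    moreover have "[:1::int,-1:] ^ (n - k) * [:1,1:] ^ (n - k) = ([:1,-1:] * [:1,1:]) ^ (n - k)"
      by (simp only: power_mult_distrib)
    ultimately show ?thesis by (simp add: mult.assoc)
  qed
  also have "[:1,-1:] * [:1::int,1:] = [:1,0,-1:]" by simp
  finally show ?thesis unfolding krawtchouk_def dual_kraw_def by simp
qed

lemma dual_kraw_lower_bound:
  assumes "2 \<le> d" "even (d + m)"
  shows "- real d * real ((d + 2 * m) choose w) / real (d + 2 * m) \<le> dual_kraw d m w"
proof (cases "w = 0 \<or> w = d + 2 * m")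
  case True
  then have "dual_kraw d m w = 1" "real ((d + 2 * m) choose w) = 1"
    using assms by (auto simp: dual_kraw_at_0 dual_kraw_top)
  moreover have "0 < real d / real (d + 2 * m)" using assms by simp
  ultimately show ?thesis by simp
next
  case False
  then have "dual_kraw_bound d (d + 2 * m) w = real d * real ((d + 2 * m) choose w) / real (d + 2 * m)"
    by (auto simp: dual_kraw_bound_def binomial_eq_0)
  then show ?thesis using abs_dual_kraw_le[OF assms(1), of m w] by linarith
qed

lemma dual_kraw_lower_bound_strict:
  assumes "2 \<le> d" "even (d + m)" "0 < m" "w \<le> d + 2 * m" "w \<noteq> 1" "w \<noteq> d + 2 * m - 1"
  shows "- real d * real ((d + 2 * m) choose w) / real (d + 2 * m) < dual_kraw d m w"
proof (cases "w = 0 \<or> w = d + 2 * m")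
  case True
  then have "dual_kraw d m w = 1" "real ((d + 2 * m) choose w) = 1"
    using assms by (auto simp: dual_kraw_at_0 dual_kraw_top)
  moreover have "0 < real d / real (d + 2 * m)" using assms by simp
  ultimately show ?thesis by simp
next
  case False
  then have "\<bar>real_of_int (dual_kraw d m w)\<bar> < real d * real ((d + 2 * m) choose w) / real (d + 2 * m)"
    using assms by (intro abs_dual_kraw_less) auto
  then show ?thesis by linarith
qed

lemma sum_chi_minus_min_eigenvalue:
  assumes "k \<le> n" "n \<le> 2 * k" "0 < n" "a \<subseteq> {..<n}"
  shows "real (n choose card a) * ((\<Sum>D\<in>ksubsets n k. chi a D) - min_eigenvalue n k)
    = real (n choose k) * (dual_kraw (2 * k - n) (n - k) (card a)
        + real (2 * k - n) * real (n choose card a) / real n)"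
proof -
  have "real (n choose card a) * (\<Sum>D\<in>ksubsets n k. chi a D)
      = real (n choose k) * dual_kraw (2 * k - n) (n - k) (card a)"
    using assms krawtchouk_reciprocity[of n "card a" k]
    by (simp add: sum_ksubsets_chi krawtchouk_eq_dual_kraw)
  moreover have "real (2 * k - n) = - (real n - 2 * real k)" using assms by (simp add: of_nat_diff)
  ultimately show ?thesis using assms by (simp add: min_eigenvalue_def field_simps)
qed

lemma min_eigenvalue_le_sum_chi:
  assumes "k < n" "n + 2 \<le> 2 * k" "even k" "a \<subseteq> {..<n}"
  shows "min_eigenvalue n k \<le> (\<Sum>D\<in>ksubsets n k. chi a D)"
proof -
  define d m where "d = 2 * k - n" and "m = n - k"
  have dm: "d + 2 * m = n" "2 \<le> d" "even (d + m)" using assms by (auto simp: d_def m_def)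
  have "- (real d * real (n choose card a) / real n) \<le> dual_kraw d m (card a)"
    using dual_kraw_lower_bound[of d m "card a"] dm by simp
  then have "0 \<le> real (n choose card a) * ((\<Sum>D\<in>ksubsets n k. chi a D) - min_eigenvalue n k)"
    using assms by (subst sum_chi_minus_min_eigenvalue) (auto simp: d_def m_def)
  moreover have "0 < n choose card a"
    using assms card_mono[OF _ assms(4)] by simp
  ultimately show ?thesis by (simp add: zero_le_mult_iff)
qed

lemma min_eigenvalue_less_sum_chi:
  assumes "k < n" "n + 2 \<le> 2 * k" "even k" "a \<subseteq> {..<n}" "card a \<noteq> 1" "card a \<noteq> n - 1"
  shows "min_eigenvalue n k < (\<Sum>D\<in>ksubsets n k. chi a D)"
proof -
  define d m where "d = 2 * k - n" and "m = n - k"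
  have dm: "d + 2 * m = n" "2 \<le> d" "even (d + m)" "0 < m" using assms by (auto simp: d_def m_def)
  have "card a \<le> n" using card_mono[OF _ assms(4)] by simp
  then have "- (real d * real (n choose card a) / real n) < dual_kraw d m (card a)"
    using dual_kraw_lower_bound_strict[of d m "card a"] dm assms by simp
  then have "0 < real (n choose card a) * ((\<Sum>D\<in>ksubsets n k. chi a D) - min_eigenvalue n k)"
    using assms by (subst sum_chi_minus_min_eigenvalue) (auto simp: d_def m_def)
  then show ?thesis by (simp add: zero_less_mult_iff)
qed

section \<open>Fourier analysis on the subsets of \<open>{..<n}\<close>\<close>

definition fourier :: "nat \<Rightarrow> (nat set \<Rightarrow> real) \<Rightarrow> nat set \<Rightarrow> real" where
  "fourier n \<psi> a = (\<Sum>x\<in>Pow {..<n}. \<psi> x * chi a x)"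

text \<open>The form \<open>\<langle>\<psi>, A \<psi>\<rangle>\<close> of the adjacency operator \<open>A\<close> of the Cayley graph of \<open>Z_2^n\<close> generated
  by \<open>G\<close>; for \<open>G = ksubsets n k\<close> the even sets induce \<open>H_{n,k}\<close>.\<close>

definition cayley_form :: "nat \<Rightarrow> nat set set \<Rightarrow> (nat set \<Rightarrow> real) \<Rightarrow> real" where
  "cayley_form n G \<psi> = (\<Sum>x\<in>Pow {..<n}. \<Sum>D\<in>G. \<psi> x * \<psi> (sym_diff x D))"

lemma card_sym_diff:
  assumes "finite A" "finite B"
  shows "card (sym_diff A B) + 2 * card (A \<inter> B) = card A + card B"
proof -
  have "sym_diff A B = (A \<union> B) - (A \<inter> B)" "(A \<union> B) \<inter> (A \<inter> B) = A \<inter> B" by auto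
  then have "card (sym_diff A B) = card (A \<union> B) - card (A \<inter> B)"
    using assms by (simp add: card_Diff_subset_Int)
  moreover have "card (A \<inter> B) \<le> card (A \<union> B)" using assms by (intro card_mono) auto
  ultimately show ?thesis using card_Un_Int[OF assms] by simp
qed

lemma chi_sym_diff:
  assumes "finite a" shows "chi a (sym_diff x y) = chi a x * chi a y"
proof -
  have "a \<inter> sym_diff x y = sym_diff (a \<inter> x) (a \<inter> y)" by auto
  moreover have "card (sym_diff (a \<inter> x) (a \<inter> y)) + 2 * card (a \<inter> x \<inter> (a \<inter> y))
      = card (a \<inter> x) + card (a \<inter> y)"
    using assms by (intro card_sym_diff) auto
  moreover have "(-1::real) ^ card (sym_diff (a \<inter> x) (a \<inter> y))
      = (-1) ^ (card (sym_diff (a \<inter> x) (a \<inter> y)) + 2 * card (a \<inter> x \<inter> (a \<inter> y)))"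
    by (simp add: power_add power_mult)
  ultimately show ?thesis by (simp add: chi_def power_add)
qed

lemma sum_Pow_chi:
  assumes "finite U" "z \<subseteq> U"
  shows "(\<Sum>a\<in>Pow U. chi a z) = (if z = {} then 2 ^ card U else 0)"
proof (cases "z = {}")
  case True
  then show ?thesis using assms by (simp add: chi_def card_Pow)
next
  case False
  then obtain i where i: "i \<in> z" by blast
  have fz: "finite z" using assms finite_subset by blast
  have flip: "chi (sym_diff a {i}) z = - chi a z" for a
  proof -
    have "chi (sym_diff a {i}) z = chi z a * chi z {i}"
      by (simp add: chi_commute[of _ z] chi_sym_diff[OF fz])
    also have "chi z {i} = -1" using i by (simp add: chi_def)
    finally show ?thesis by (simp add: chi_commute)
  qed
  have involution: "sym_diff (sym_diff a {i}) {i} = a" for a by auto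
  \<comment> \<open>toggling \<open>i\<close> is a sign-reversing involution on \<open>Pow U\<close>\<close>
  have "(\<Sum>a\<in>Pow U. chi a z) = (\<Sum>a\<in>Pow U. chi (sym_diff a {i}) z)"
    by (rule sum.reindex_bij_witness[of _ "\<lambda>a. sym_diff a {i}" "\<lambda>a. sym_diff a {i}"])
      (use i assms involution in auto)
  then show ?thesis using False by (simp add: flip sum_negf)
qed

lemma sum_Pow_chi_mult:
  assumes "x \<subseteq> {..<n}" "y \<subseteq> {..<n}"
  shows "(\<Sum>a\<in>Pow {..<n}. chi a x * chi a y) = (if x = y then 2 ^ n else 0)"
proof -
  have "(\<Sum>a\<in>Pow {..<n}. chi a x * chi a y) = (\<Sum>a\<in>Pow {..<n}. chi a (sym_diff x y))"
    by (intro sum.cong refl) (auto simp: chi_sym_diff finite_subset)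
  also have "\<dots> = (if x = y then 2 ^ n else 0)"
  proof (cases "x = y")
    case True
    then show ?thesis using sum_Pow_chi[of "{..<n}" "{}"] by simp
  next
    case False
    then have "sym_diff x y \<noteq> {}" by blast
    moreover have "(\<Sum>a\<in>Pow {..<n}. chi a (sym_diff x y))
        = (if sym_diff x y = {} then 2 ^ card {..<n} else 0)"
      using assms by (intro sum_Pow_chi) auto
    ultimately show ?thesis using False by (simp only: if_False if_not_P)
  qed
  finally show ?thesis .
qed

lemma fourier_inversion:
  assumes "y \<subseteq> {..<n}"
  shows "(\<Sum>a\<in>Pow {..<n}. fourier n \<psi> a * chi a y) = 2 ^ n * \<psi> y"
proof -
  have "(\<Sum>a\<in>Pow {..<n}. fourier n \<psi> a * chi a y)
      = (\<Sum>x\<in>Pow {..<n}. \<psi> x * (\<Sum>a\<in>Pow {..<n}. chi a x * chi a y))"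
    unfolding fourier_def sum_distrib_left sum_distrib_right
    by (subst sum.swap) (simp add: mult.assoc)
  also have "\<dots> = (\<Sum>x\<in>Pow {..<n}. if x = y then 2 ^ n * \<psi> y else 0)"
    by (intro sum.cong refl) (use sum_Pow_chi_mult assms in auto)
  also have "\<dots> = 2 ^ n * \<psi> y" using assms by simp
  finally show ?thesis .
qed

lemma cayley_form_fourier:
  assumes "G \<subseteq> Pow {..<n}"
  shows "2 ^ n * cayley_form n G \<psi> = (\<Sum>a\<in>Pow {..<n}. (fourier n \<psi> a)\<^sup>2 * (\<Sum>D\<in>G. chi a D))"
proof -
  let ?P = "Pow {..<n}"
  have "2 ^ n * cayley_form n G \<psi>
      = (\<Sum>x\<in>?P. \<Sum>D\<in>G. \<Sum>a\<in>?P. \<psi> x * fourier n \<psi> a * chi a x * chi a D)"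
    unfolding cayley_form_def sum_distrib_left
  proof (intro sum.cong refl)
    fix x D assume "x \<in> ?P" "D \<in> G"
    then have "sym_diff x D \<subseteq> {..<n}" "finite x" "finite D"
      using assms by (auto intro: finite_subset)
    have "2 ^ n * \<psi> (sym_diff x D) = (\<Sum>a\<in>?P. fourier n \<psi> a * chi a (sym_diff x D))"
      using fourier_inversion[of "sym_diff x D" n \<psi>] \<open>sym_diff x D \<subseteq> {..<n}\<close> by simp
    also have "\<dots> = (\<Sum>a\<in>?P. fourier n \<psi> a * chi a x * chi a D)"
      using finite_subset[OF _ finite_lessThan[of n]] by (intro sum.cong refl) (simp add: chi_sym_diff)
    finally show "2 ^ n * (\<psi> x * \<psi> (sym_diff x D))
        = (\<Sum>a\<in>?P. \<psi> x * fourier n \<psi> a * chi a x * chi a D)"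
      by (simp add: sum_distrib_left mult_ac)
  qed
  also have "\<dots> = (\<Sum>a\<in>?P. \<Sum>D\<in>G. \<Sum>x\<in>?P. \<psi> x * fourier n \<psi> a * chi a x * chi a D)"
    by (subst sum.swap, subst (1 2) sum.swap) (rule refl)
  also have "\<dots> = (\<Sum>a\<in>?P. \<Sum>D\<in>G. fourier n \<psi> a * chi a D * fourier n \<psi> a)"
    by (intro sum.cong refl) (simp add: fourier_def sum_distrib_left sum_distrib_right mult_ac)
  also have "\<dots> = (\<Sum>a\<in>?P. (fourier n \<psi> a)\<^sup>2 * (\<Sum>D\<in>G. chi a D))"
    by (simp add: sum_distrib_right power2_eq_square mult_ac)
  finally show ?thesis .
qed

lemma parseval: "2 ^ n * (\<Sum>x\<in>Pow {..<n}. (\<psi> x)\<^sup>2) = (\<Sum>a\<in>Pow {..<n}. (fourier n \<psi> a)\<^sup>2)"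
  using cayley_form_fourier[of "{{}}" n \<psi>] by (simp add: cayley_form_def chi_def power2_eq_square)

lemma cayley_form_minus_fourier:
  assumes "G \<subseteq> Pow {..<n}"
  shows "2 ^ n * (cayley_form n G \<psi> - c * (\<Sum>x\<in>Pow {..<n}. (\<psi> x)\<^sup>2))
    = (\<Sum>a\<in>Pow {..<n}. (fourier n \<psi> a)\<^sup>2 * ((\<Sum>D\<in>G. chi a D) - c))"
proof -
  have "2 ^ n * (cayley_form n G \<psi> - c * (\<Sum>x\<in>Pow {..<n}. (\<psi> x)\<^sup>2))
      = 2 ^ n * cayley_form n G \<psi> - c * (2 ^ n * (\<Sum>x\<in>Pow {..<n}. (\<psi> x)\<^sup>2))"
    by (simp add: algebra_simps)
  also have "\<dots> = (\<Sum>a\<in>Pow {..<n}. (fourier n \<psi> a)\<^sup>2 * ((\<Sum>D\<in>G. chi a D) - c))"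
    unfolding cayley_form_fourier[OF assms] parseval
    by (simp add: sum_distrib_left sum_subtractf algebra_simps)
  finally show ?thesis .
qed

lemma min_eigenvalue_le_cayley_form:
  assumes "k < n" "n + 2 \<le> 2 * k" "even k"
  shows "min_eigenvalue n k * (\<Sum>x\<in>Pow {..<n}. (\<psi> x)\<^sup>2) \<le> cayley_form n (ksubsets n k) \<psi>"
proof -
  have "0 \<le> (\<Sum>a\<in>Pow {..<n}. (fourier n \<psi> a)\<^sup>2 * ((\<Sum>D\<in>ksubsets n k. chi a D) - min_eigenvalue n k))"
    using min_eigenvalue_le_sum_chi[OF assms] by (intro sum_nonneg) simp
  then have "0 \<le> 2 ^ n * (cayley_form n (ksubsets n k) \<psi> - min_eigenvalue n k * (\<Sum>x\<in>Pow {..<n}. (\<psi> x)\<^sup>2))"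
    by (subst cayley_form_minus_fourier[OF ksubsets_subset_Pow])
  moreover have "(0::real) < 2 ^ n" by simp
  ultimately show ?thesis by (simp add: zero_le_mult_iff)
qed

lemma fourier_eq_0_if_cayley_form_eq:
  assumes "k < n" "n + 2 \<le> 2 * k" "even k"
    and eq: "cayley_form n (ksubsets n k) \<psi> = min_eigenvalue n k * (\<Sum>x\<in>Pow {..<n}. (\<psi> x)\<^sup>2)"
    and a: "a \<subseteq> {..<n}" "card a \<noteq> 1" "card a \<noteq> n - 1"
  shows "fourier n \<psi> a = 0"
proof -
  let ?term = "\<lambda>a. (fourier n \<psi> a)\<^sup>2 * ((\<Sum>D\<in>ksubsets n k. chi a D) - min_eigenvalue n k)"
  have "(\<Sum>a\<in>Pow {..<n}. ?term a) = 0"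
    using eq cayley_form_minus_fourier[OF ksubsets_subset_Pow, of n k \<psi> "min_eigenvalue n k"]
    by simp
  moreover have "\<forall>a\<in>Pow {..<n}. 0 \<le> ?term a"
    using min_eigenvalue_le_sum_chi[OF assms(1-3)] by simp
  ultimately have "?term a = 0" using a by (subst (asm) sum_nonneg_eq_0_iff) auto
  moreover have "min_eigenvalue n k < (\<Sum>D\<in>ksubsets n k. chi a D)"
    using min_eigenvalue_less_sum_chi[OF assms(1-3) a] .
  ultimately show ?thesis by simp
qed

section \<open>Signed dictators\<close>

lemma pairwise_sums_01_values:
  fixes u :: "nat \<Rightarrow> real"
  assumes "3 \<le> n" "i < n"
    and pair: "\<And>i j. i < n \<Longrightarrow> j < n \<Longrightarrow> i \<noteq> j \<Longrightarrow> u i + u j \<in> {0, 1}"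
  shows "u i \<in> {-1/2, 0, 1/2, 1}"
proof -
  define j :: nat where "j = (if i = 0 then 1 else 0)"
  define l :: nat where "l = (if i = 2 then 1 else 2)"
  have jl: "j < n" "l < n" "j \<noteq> i" "l \<noteq> i" "j \<noteq> l" using assms by (auto simp: j_def l_def)
  have "u i = ((u i + u j) + (u i + u l) - (u j + u l)) / 2" by simp
  then show ?thesis using pair[OF \<open>i < n\<close> jl(1)] pair[OF \<open>i < n\<close> jl(2)] pair[OF jl(1,2,5)] jl by auto
qed

lemma pairwise_sums_01_no_halves:
  fixes u :: "nat \<Rightarrow> real"
  assumes "5 \<le> n" "(\<Sum>i<n. u i) = 1"
    and pair: "\<And>i j. i < n \<Longrightarrow> j < n \<Longrightarrow> i \<noteq> j \<Longrightarrow> u i + u j \<in> {0, 1}"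
    and "i < n"
  shows "u i \<in> {0, 1}"
proof (rule ccontr)
  assume "u i \<notin> {0, 1}"
  then have "u i \<in> {-1/2, 1/2}" using pairwise_sums_01_values[of n i u, OF _ \<open>i < n\<close> pair] assms by auto
  then have halves: "u j \<in> {-1/2, 1/2}" if "j < n" for j
    using pair[OF \<open>i < n\<close> that] pairwise_sums_01_values[of n j u, OF _ that pair] assms by (cases "j = i") auto
  have "5 \<le> real n" using assms(1) by simp
  have "(\<Sum>j<n. u j) \<ge> 3/2"
  proof (cases "\<exists>i<n. u i = -1/2")
    case True
    then obtain i where i: "i < n" "u i = -1/2" by blast
    have "u j = 1/2" if "j \<in> {..<n} - {i}" for j
      using that halves pair[OF i(1), of j] i by force
    then have "(\<Sum>j\<in>{..<n} - {i}. u j) = (\<Sum>j\<in>{..<n} - {i}. 1/2)" by (intro sum.cong) auto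
    also have "\<dots> = (real n - 1) / 2" using i by (simp add: card_Diff_singleton of_nat_diff)
    finally have "(\<Sum>j<n. u j) = -1/2 + (real n - 1) / 2"
      using i by (simp add: sum.remove)
    then show ?thesis using \<open>5 \<le> real n\<close> by (simp add: field_simps)
  next
    case False
    then have "(\<Sum>j<n. u j) = (\<Sum>j<n. 1/2)" using halves by (intro sum.cong) force+
    then show ?thesis using \<open>5 \<le> real n\<close> by simp
  qed
  then show False using assms by simp
qed

lemma unit_vector_if_pairwise_sums_01:
  fixes u :: "nat \<Rightarrow> real"
  assumes "5 \<le> n" "(\<Sum>i<n. u i) = 1"
    and pair: "\<And>i j. i < n \<Longrightarrow> j < n \<Longrightarrow> i \<noteq> j \<Longrightarrow> u i + u j \<in> {0, 1}"
  shows "\<exists>i<n. u i = 1 \<and> (\<forall>j<n. j \<noteq> i \<longrightarrow> u j = 0)"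
proof -
  have zero_one: "u j \<in> {0, 1}" if "j < n" for j
    by (rule pairwise_sums_01_no_halves[OF assms(1,2) _ that]) (use pair in blast)
  obtain i where "i < n" "u i = 1"
  proof (rule ccontr)
    assume "\<not> thesis"
    then have "(\<Sum>i<n. u i) = 0" using zero_one that by (intro sum.neutral) force
    then show False using assms by simp
  qed
  moreover have "u j = 0" if "j < n" "j \<noteq> i" for j
    using pair[of i j] that zero_one[OF \<open>j < n\<close>] \<open>u i = 1\<close> \<open>i < n\<close> by auto
  ultimately show ?thesis by blast
qed

lemma chi_singleton: "chi {i} x = (if i \<in> x then -1 else 1)"
  by (auto simp: chi_def Int_insert_left)

lemma chi_complement_singleton:
  assumes "x \<subseteq> {..<n}" "even (card x)"
  shows "chi ({..<n} - {i}) x = chi {i} x"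
proof -
  have "finite x" using assms(1) finite_subset by blast
  have inter: "({..<n} - {i}) \<inter> x = x - {i}" using assms(1) by auto
  show ?thesis
  proof (cases "i \<in> x")
    case True
    then have "odd (card (x - {i}))"
      using assms(2) \<open>finite x\<close> card_Diff_singleton card_gt_0_iff by fastforce
    then show ?thesis using True inter by (simp add: chi_def chi_singleton)
  next
    case False
    then show ?thesis using assms(2) inter by (simp add: chi_def chi_singleton)
  qed
qed

lemma fourier_complement_singleton:
  assumes "\<forall>x\<in>Pow {..<n}. odd (card x) \<longrightarrow> \<psi> x = 0"
  shows "fourier n \<psi> ({..<n} - {i}) = fourier n \<psi> {i}"
  unfolding fourier_def
proof (intro sum.cong refl)
  fix x assume "x \<in> Pow {..<n}"
  then show "\<psi> x * chi ({..<n} - {i}) x = \<psi> x * chi {i} x"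
    using assms chi_complement_singleton[of x n i] by (cases "even (card x)") auto
qed

lemma fourier_expansion_levels_1:
  assumes "5 \<le> n"
    and odd_zero: "\<forall>x\<in>Pow {..<n}. odd (card x) \<longrightarrow> \<psi> x = 0"
    and levels: "\<forall>a\<in>Pow {..<n}. card a \<noteq> 1 \<longrightarrow> card a \<noteq> n - 1 \<longrightarrow> fourier n \<psi> a = 0"
    and x: "x \<subseteq> {..<n}" "even (card x)"
  shows "2 ^ n * \<psi> x = 2 * (\<Sum>i<n. fourier n \<psi> {i} * chi {i} x)"
proof -
  define g where "g a = fourier n \<psi> a * chi a x" for a
  define A1 where "A1 = (\<lambda>i. {i}) ` {..<n}"
  define A2 where "A2 = (\<lambda>i. {..<n} - {i}) ` {..<n}"
  have A2_card: "card a = n - 1" if "a \<in> A2" for a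
    using that by (auto simp: A2_def card_Diff_singleton)
  have outside: "g a = 0" if "a \<in> Pow {..<n} - (A1 \<union> A2)" for a
  proof -
    have "card a \<noteq> 1" using that by (auto simp: A1_def card_1_singleton_iff)
    moreover have "card a \<noteq> n - 1"
    proof
      assume "card a = n - 1"
      moreover have "a \<subseteq> {..<n}" using that by blast
      ultimately have "card ({..<n} - a) = 1"
        using assms(1) by (simp add: card_Diff_subset finite_subset)
      then obtain i where i: "{..<n} - a = {i}" by (auto simp: card_1_singleton_iff)
      then have "a = {..<n} - {i}" "i < n" using that by auto
      then show False using that by (auto simp: A2_def)
    qed
    ultimately show ?thesis using levels that by (simp add: g_def)
  qed
  have "A1 \<inter> A2 = {}"
  proof -
    have "card a = 1" if "a \<in> A1" for a using that by (auto simp: A1_def)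
    then show ?thesis using A2_card assms(1) by fastforce
  qed
  have "2 ^ n * \<psi> x = (\<Sum>a\<in>Pow {..<n}. g a)" using fourier_inversion[of x n \<psi>] x by (simp add: g_def)
  also have "\<dots> = (\<Sum>a\<in>A1 \<union> A2. g a)"
    by (rule sum.mono_neutral_right) (use outside in \<open>auto simp: A1_def A2_def\<close>)
  also have "\<dots> = (\<Sum>a\<in>A1. g a) + (\<Sum>a\<in>A2. g a)"
    using \<open>A1 \<inter> A2 = {}\<close> by (intro sum.union_disjoint) (auto simp: A1_def A2_def)
  also have "(\<Sum>a\<in>A1. g a) = (\<Sum>i<n. fourier n \<psi> {i} * chi {i} x)"
    unfolding A1_def g_def by (subst sum.reindex) (auto simp: inj_on_def)
  also have "(\<Sum>a\<in>A2. g a) = (\<Sum>i<n. fourier n \<psi> ({..<n} - {i}) * chi ({..<n} - {i}) x)"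
    unfolding A2_def g_def by (subst sum.reindex) (auto simp: inj_on_def)
  also have "\<dots> = (\<Sum>i<n. fourier n \<psi> {i} * chi {i} x)"
    using fourier_complement_singleton[OF odd_zero] chi_complement_singleton[OF x] by simp
  finally show ?thesis by simp
qed

lemma signed_dictator_if_linear:
  fixes e :: "nat \<Rightarrow> real"
  assumes "5 \<le> n"
    and linear: "\<And>x. x \<subseteq> {..<n} \<Longrightarrow> even (card x) \<Longrightarrow> \<psi> x = (\<Sum>l<n. e l * chi {l} x)"
    and sign: "\<And>x. x \<subseteq> {..<n} \<Longrightarrow> even (card x) \<Longrightarrow> \<psi> x = 1 \<or> \<psi> x = -1"
  shows "\<exists>i<n. \<exists>s. (s = 1 \<or> s = -1) \<and> (\<forall>x\<in>Pow {..<n}. even (card x) \<longrightarrow> \<psi> x = s * chi {i} x)"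
proof -
  define \<sigma> where "\<sigma> = \<psi> {}"
  have \<sigma>: "\<sigma> = 1 \<or> \<sigma> = -1" using sign[of "{}"] by (simp add: \<sigma>_def)
  then have \<sigma>_sq: "\<sigma> * \<sigma> = 1" by auto
  have sum_e: "(\<Sum>l<n. e l) = \<sigma>" using linear[of "{}"] by (simp add: \<sigma>_def chi_def)
  have pair: "\<psi> {i, j} = \<sigma> - 2 * e i - 2 * e j" if ij: "i < n" "j < n" "i \<noteq> j" for i j
  proof -
    have "\<psi> {i, j} = (\<Sum>l<n. e l - 2 * (if l = i then e l else 0) - 2 * (if l = j then e l else 0))"
      using linear[of "{i, j}"] ij by (auto simp: chi_singleton intro!: sum.cong)
    then show ?thesis using ij sum_e by (simp add: sum_subtractf sum_distrib_left[symmetric])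
  qed
  define u where "u l = \<sigma> * e l" for l
  have "(\<Sum>l<n. u l) = 1" unfolding u_def using sum_e \<sigma>_sq by (simp add: sum_distrib_left[symmetric])
  moreover have "u i + u j \<in> {0, 1}" if "i < n" "j < n" "i \<noteq> j" for i j
  proof -
    have "u i + u j = \<sigma> * (e i + e j)" by (simp add: u_def algebra_simps)
    also have "e i + e j = (\<sigma> - \<psi> {i, j}) / 2" using pair[OF that] by simp
    also have "\<sigma> * ((\<sigma> - \<psi> {i, j}) / 2) = (1 - \<sigma> * \<psi> {i, j}) / 2"
      using \<sigma>_sq by (simp add: right_diff_distrib)
    finally show ?thesis using sign[of "{i, j}"] that \<sigma> by auto
  qed
  ultimately obtain i where i: "i < n" "u i = 1" "\<forall>j<n. j \<noteq> i \<longrightarrow> u j = 0"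
    using unit_vector_if_pairwise_sums_01[OF assms(1)] by blast
  have "e l = \<sigma> * u l" for l using \<sigma>_sq by (simp add: u_def mult.assoc[symmetric])
  then have "(\<Sum>l<n. e l * chi {l} x) = (\<Sum>l<n. if l = i then \<sigma> * chi {i} x else 0)" for x
    using i by (intro sum.cong refl) auto
  then have "\<psi> x = \<sigma> * chi {i} x" if "x \<in> Pow {..<n}" "even (card x)" for x
    using linear[of x] that i(1) by simp
  then show ?thesis using i(1) \<sigma> by blast
qed

lemma dictator:
  assumes "5 \<le> n"
    and sign: "\<forall>x\<in>Pow {..<n}. even (card x) \<longrightarrow> \<psi> x = 1 \<or> \<psi> x = -1"
    and odd_zero: "\<forall>x\<in>Pow {..<n}. odd (card x) \<longrightarrow> \<psi> x = 0"
    and levels: "\<forall>a\<in>Pow {..<n}. card a \<noteq> 1 \<longrightarrow> card a \<noteq> n - 1 \<longrightarrow> fourier n \<psi> a = 0"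
  shows "\<exists>i<n. \<exists>s. (s = 1 \<or> s = -1) \<and> (\<forall>x\<in>Pow {..<n}. even (card x) \<longrightarrow> \<psi> x = s * chi {i} x)"
proof (rule signed_dictator_if_linear[OF assms(1)])
  fix x assume x: "x \<subseteq> {..<n}" "even (card x)"
  have "\<psi> x = 2 * (\<Sum>l<n. fourier n \<psi> {l} * chi {l} x) / 2 ^ n"
    using fourier_expansion_levels_1[OF assms(1) odd_zero levels x] by (simp add: field_simps)
  then show "\<psi> x = (\<Sum>l<n. 2 * fourier n \<psi> {l} / 2 ^ n * chi {l} x)"
    by (simp add: sum_distrib_left sum_divide_distrib mult.assoc)
  show "\<psi> x = 1 \<or> \<psi> x = -1" using sign x by blast
qed

section \<open>Homomorphisms between the graphs \<open>H_{n,k}\<close>\<close>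

definition blowup :: "nat \<Rightarrow> nat \<Rightarrow> nat set \<Rightarrow> nat set" where
  "blowup n t S = {j. j div n < t \<and> j mod n \<in> S}"

lemma blowup_eq_image:
  assumes "S \<subseteq> {..<n}"
  shows "blowup n t S = (\<lambda>(i, s). i + n * s) ` (S \<times> {..<t})"
proof (intro equalityI subsetI)
  fix j assume "j \<in> blowup n t S"
  moreover have "j = j mod n + n * (j div n)" by simp
  ultimately show "j \<in> (\<lambda>(i, s). i + n * s) ` (S \<times> {..<t})"
    unfolding blowup_def by (intro image_eqI[of _ _ "(j mod n, j div n)"]) auto
next
  fix j assume "j \<in> (\<lambda>(i, s). i + n * s) ` (S \<times> {..<t})"
  then obtain i s where "i \<in> S" "s < t" "j = i + n * s" by auto
  moreover have "i < n" using \<open>i \<in> S\<close> assms by auto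
  ultimately show "j \<in> blowup n t S" by (simp add: blowup_def)
qed

lemma card_blowup:
  assumes "S \<subseteq> {..<n}"
  shows "card (blowup n t S) = t * card S"
proof -
  have "inj_on (\<lambda>(i, s). i + n * s) (S \<times> {..<t})"
  proof (rule inj_onI, clarsimp)
    fix i s i' s' assume "i \<in> S" "i' \<in> S" and eq: "i + n * s = i' + n * s'"
    then have "i < n" "i' < n" using assms by auto
    then have "(i + n * s) mod n = i" "(i' + n * s') mod n = i'"
      "(i + n * s) div n = s" "(i' + n * s') div n = s'" by auto
    then show "i = i' \<and> s = s'" using eq by metis
  qed
  moreover have "finite S" using assms finite_subset by blast
  ultimately show ?thesis by (simp add: blowup_eq_image[OF assms] card_image card_cartesian_product)
qed

lemma blowup_subset: "0 < n \<Longrightarrow> blowup n t S \<subseteq> {..<n * t}"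
  by (auto simp: blowup_def div_less_iff_less_mult mult.commute)

lemma sym_diff_blowup: "sym_diff (blowup n t S) (blowup n t T) = blowup n t (sym_diff S T)"
  unfolding blowup_def by auto

lemma H_hom_blowup:
  assumes "0 < n"
  shows "H_hom n k (n * t) (k * t) (blowup n t)"
  unfolding H_hom_def
proof (intro conjI funcsetI ballI impI)
  fix S assume "S \<in> H_verts n"
  then show "blowup n t S \<in> H_verts (n * t)"
    using card_blowup[of S n t] blowup_subset[OF assms] by (auto simp: H_verts_def)
next
  fix S T assume "S \<in> H_verts n" "T \<in> H_verts n" "H_adj k S T"
  then have "sym_diff S T \<subseteq> {..<n}" "card (sym_diff S T) = k"
    by (auto simp: H_verts_def H_adj_def)
  then show "H_adj (k * t) (blowup n t S) (blowup n t T)"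
    using card_blowup[of "sym_diff S T" n t] by (simp add: H_adj_def sym_diff_blowup mult.commute)
qed

definition hom_coordinate :: "nat \<Rightarrow> (nat set \<Rightarrow> nat set) \<Rightarrow> nat \<Rightarrow> nat set \<Rightarrow> real" where
  "hom_coordinate n f j x = (if x \<in> H_verts n then (if j \<in> f x then -1 else 1) else 0)"

lemma sum_sign_indicator:
  assumes "S \<subseteq> {..<N}"
  shows "(\<Sum>j<N. if j \<in> S then -1 else 1 :: real) = real N - 2 * real (card S)"
proof -
  have "(\<Sum>j<N. if j \<in> S then -1 else 1 :: real) = (\<Sum>j<N. 1 - 2 * (if j \<in> S then 1 else 0))"
    by (intro sum.cong) auto
  also have "\<dots> = real N - 2 * real (card ({..<N} \<inter> S))"
    by (simp add: sum_subtractf sum_distrib_left[symmetric] sum.inter_restrict[symmetric])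
  finally show ?thesis using assms by (simp add: Int_absorb1)
qed

lemma sym_diff_ksubset_mem_H_verts:
  assumes "x \<in> H_verts n" "D \<in> ksubsets n k" "even k"
  shows "sym_diff x D \<in> H_verts n"
proof -
  have "x \<subseteq> {..<n}" "even (card x)" "D \<subseteq> {..<n}" "card D = k"
    using assms by (auto simp: H_verts_def ksubsets_def)
  moreover from this have "finite x" "finite D" by (auto intro: finite_subset)
  ultimately have "even (card (sym_diff x D))"
    using card_sym_diff[of x D] assms(3) by presburger
  then show ?thesis using \<open>x \<subseteq> {..<n}\<close> \<open>D \<subseteq> {..<n}\<close> by (auto simp: H_verts_def)
qed

lemma sum_square_hom_coordinate: "(\<Sum>x\<in>Pow {..<n}. (hom_coordinate n f j x)\<^sup>2) = real (card (H_verts n))"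
proof -
  have "H_verts n \<subseteq> Pow {..<n}" by (auto simp: H_verts_def)
  then have "(\<Sum>x\<in>Pow {..<n}. (hom_coordinate n f j x)\<^sup>2) = (\<Sum>x\<in>H_verts n. 1)"
    by (intro sum.mono_neutral_cong_right) (auto simp: hom_coordinate_def)
  then show ?thesis by simp
qed

lemma sum_cayley_form_hom_coordinate:
  assumes hom: "H_hom n k n' k' f" and "even k"
  shows "(\<Sum>j<n'. cayley_form n (ksubsets n k) (hom_coordinate n f j))
    = real (card (H_verts n)) * (real (n choose k) * (real n' - 2 * real k'))"
proof -
  have inner: "(\<Sum>j<n'. hom_coordinate n f j x * hom_coordinate n f j (sym_diff x D))
      = (if x \<in> H_verts n then real n' - 2 * real k' else 0)" if "D \<in> ksubsets n k" for x D
  proof (cases "x \<in> H_verts n")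
    case True
    define y where "y = sym_diff x D"
    have y: "y \<in> H_verts n" using sym_diff_ksubset_mem_H_verts[OF True that \<open>even k\<close>] by (simp add: y_def)
    have "sym_diff x y = D" by (auto simp: y_def)
    then have "H_adj k x y" using that by (simp add: H_adj_def ksubsets_def)
    then have "card (sym_diff (f x) (f y)) = k'" using hom True y by (simp add: H_hom_def H_adj_def)
    moreover have "f x \<subseteq> {..<n'}" "f y \<subseteq> {..<n'}"
      using hom True y by (auto simp: H_hom_def H_verts_def Pi_def)
    ultimately have "(\<Sum>j<n'. if j \<in> sym_diff (f x) (f y) then -1 else 1 :: real) = real n' - 2 * real k'"
      using sum_sign_indicator[of "sym_diff (f x) (f y)" n'] by auto
    moreover have "hom_coordinate n f j x * hom_coordinate n f j y
        = (if j \<in> sym_diff (f x) (f y) then -1 else 1)" for j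
      using True y by (auto simp: hom_coordinate_def)
    ultimately show ?thesis using True by (simp add: y_def)
  qed (simp add: hom_coordinate_def)
  have "(\<Sum>j<n'. cayley_form n (ksubsets n k) (hom_coordinate n f j))
      = (\<Sum>x\<in>Pow {..<n}. \<Sum>D\<in>ksubsets n k. \<Sum>j<n'. hom_coordinate n f j x * hom_coordinate n f j (sym_diff x D))"
    unfolding cayley_form_def by (subst sum.swap) (simp add: sum.swap[of _ "{..<n'}"])
  also have "\<dots> = (\<Sum>x\<in>Pow {..<n}. \<Sum>D\<in>ksubsets n k. if x \<in> H_verts n then real n' - 2 * real k' else 0)"
    by (intro sum.cong refl inner)
  also have "\<dots> = (\<Sum>x\<in>Pow {..<n}. if x \<in> H_verts n then real (n choose k) * (real n' - 2 * real k') else 0)"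
    by (intro sum.cong refl) (simp add: card_ksubsets)
  also have "\<dots> = real (card (H_verts n)) * (real (n choose k) * (real n' - 2 * real k'))"
  proof -
    have "Pow {..<n} \<inter> H_verts n = H_verts n" by (auto simp: H_verts_def)
    then show ?thesis by (simp add: sum.If_cases)
  qed
  finally show ?thesis .
qed

lemma cayley_form_hom_coordinate_eq:
  assumes "k < n" "n + 2 \<le> 2 * k" "even k" and ratio: "n * k' = n' * k"
    and hom: "H_hom n k n' k' f" and "j < n'"
  shows "cayley_form n (ksubsets n k) (hom_coordinate n f j)
    = min_eigenvalue n k * (\<Sum>x\<in>Pow {..<n}. (hom_coordinate n f j x)\<^sup>2)"
proof -
  define E where "E = real (card (H_verts n))"
  define gap where "gap i = cayley_form n (ksubsets n k) (hom_coordinate n f i) - min_eigenvalue n k * E" for i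
  have gap_nonneg: "0 \<le> gap i" for i
    using min_eigenvalue_le_cayley_form[OF assms(1-3), of "hom_coordinate n f i"]
    by (simp add: gap_def E_def sum_square_hom_coordinate)
  have eig: "real n' * min_eigenvalue n k = real (n choose k) * (real n' - 2 * real k')"
  proof -
    have "real n' * real k = real n * real k'" using ratio by (metis of_nat_mult)
    then show ?thesis using assms(1) by (simp add: min_eigenvalue_def field_simps)
  qed
  \<comment> \<open>all gaps are nonnegative, and by \<open>n k' = n' k\<close> they sum to zero\<close>
  have "(\<Sum>i<n'. gap i) = (\<Sum>i<n'. cayley_form n (ksubsets n k) (hom_coordinate n f i))
      - (real n' * min_eigenvalue n k) * E"
    by (simp add: gap_def sum_subtractf)
  also have "\<dots> = 0"
    unfolding eig sum_cayley_form_hom_coordinate[OF hom assms(3)] E_def by simp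
  finally have "(\<Sum>i<n'. gap i) = 0" .
  then have "gap j = 0" using gap_nonneg \<open>j < n'\<close> by (subst (asm) sum_nonneg_eq_0_iff) auto
  then show ?thesis by (simp add: gap_def E_def sum_square_hom_coordinate)
qed

lemma hom_coordinate_dictator:
  assumes "k < n" "n + 2 \<le> 2 * k" "even k" "n * k' = n' * k"
    and hom: "H_hom n k n' k' f" and "j < n'"
  shows "\<exists>i<n. \<forall>x\<in>H_verts n. \<forall>y\<in>H_verts n. j \<in> sym_diff (f x) (f y) \<longleftrightarrow> i \<in> sym_diff x y"
proof -
  let ?\<psi> = "hom_coordinate n f j"
  have "5 \<le> n" using assms(1-3) by presburger
  have "\<forall>x\<in>Pow {..<n}. even (card x) \<longrightarrow> ?\<psi> x = 1 \<or> ?\<psi> x = -1"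
    "\<forall>x\<in>Pow {..<n}. odd (card x) \<longrightarrow> ?\<psi> x = 0"
    by (auto simp: hom_coordinate_def H_verts_def)
  moreover have "\<forall>a\<in>Pow {..<n}. card a \<noteq> 1 \<longrightarrow> card a \<noteq> n - 1 \<longrightarrow> fourier n ?\<psi> a = 0"
    using fourier_eq_0_if_cayley_form_eq[OF assms(1-3) cayley_form_hom_coordinate_eq[OF assms]] by simp
  ultimately have "\<exists>i<n. \<exists>s. (s = 1 \<or> s = -1) \<and> (\<forall>x\<in>Pow {..<n}. even (card x) \<longrightarrow> ?\<psi> x = s * chi {i} x)"
    by (rule dictator[OF \<open>5 \<le> n\<close>])
  then obtain i s where i: "i < n" "s = 1 \<or> s = -1"
    and dict: "\<forall>x\<in>Pow {..<n}. even (card x) \<longrightarrow> ?\<psi> x = s * chi {i} x"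
    by blast
  have "j \<in> sym_diff (f x) (f y) \<longleftrightarrow> i \<in> sym_diff x y" if "x \<in> H_verts n" "y \<in> H_verts n" for x y
  proof -
    have "(if j \<in> f z then -1 else 1) = s * (if i \<in> z then -1 else 1)" if "z \<in> H_verts n" for z
      using dict that by (auto simp: H_verts_def hom_coordinate_def chi_singleton)
    from this[OF \<open>x \<in> H_verts n\<close>] this[OF \<open>y \<in> H_verts n\<close>]
    have "(j \<in> f x \<longleftrightarrow> j \<in> f y) \<longleftrightarrow> (i \<in> x \<longleftrightarrow> i \<in> y)"
      using i(2) by (auto split: if_splits)
    then show ?thesis by blast
  qed
  then show ?thesis using i(1) by blast
qed

lemma card_preimage_eq_sum_fibres:
  assumes "finite J" "finite A"
  shows "card {j\<in>J. g j \<in> A} = (\<Sum>i\<in>A. card {j\<in>J. g j = i})"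
proof -
  have "{j\<in>J. g j \<in> A} = (\<Union>i\<in>A. {j\<in>J. g j = i})" by auto
  moreover have "card (\<Union>i\<in>A. {j\<in>J. g j = i}) = (\<Sum>i\<in>A. card {j\<in>J. g j = i})"
    using assms by (intro card_UN_disjoint) auto
  ultimately show ?thesis by simp
qed

lemma card_sym_diff_eq_sum_fibres:
  fixes N :: nat
  assumes "A \<subseteq> {..<N}" "B \<subseteq> {..<N}" "finite (sym_diff x y)"
    and copy: "\<And>j. j < N \<Longrightarrow> j \<in> sym_diff A B \<longleftrightarrow> idx j \<in> sym_diff x y"
  shows "card (sym_diff A B) = (\<Sum>i\<in>sym_diff x y. card {j\<in>{..<N}. idx j = i})"
proof -
  have "sym_diff A B = {j\<in>{..<N}. idx j \<in> sym_diff x y}" using assms by blast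
  then show ?thesis using card_preimage_eq_sum_fibres[OF finite_lessThan assms(3), of N idx] by simp
qed

lemma eq_if_sums_over_ksubsets_eq:
  fixes m :: "nat \<Rightarrow> nat"
  assumes "0 < k" "k < n"
    and sums: "\<And>D. D \<subseteq> {..<n} \<Longrightarrow> card D = k \<Longrightarrow> sum m D = c"
    and "i < n" "i' < n"
  shows "m i = m i'"
proof (cases "i = i'")
  case False
  have "k - 1 \<le> card ({..<n} - {i, i'})" using assms False by (simp add: card_Diff_subset)
  then obtain T where T: "T \<subseteq> {..<n} - {i, i'}" "card T = k - 1" "finite T"
    by (rule obtain_subset_with_card_n)
  moreover from T(1) have "i \<notin> T" "i' \<notin> T" by auto
  ultimately have "card (insert i T) = k" "card (insert i' T) = k" using assms by auto
  moreover have "insert i T \<subseteq> {..<n}" "insert i' T \<subseteq> {..<n}" using T assms by auto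
  ultimately have "sum m (insert i T) = c" "sum m (insert i' T) = c" using sums by blast+
  then have "m i + sum m T = c" "m i' + sum m T = c"
    using \<open>i \<notin> T\<close> \<open>i' \<notin> T\<close> \<open>finite T\<close> by simp_all
  then show ?thesis by simp
qed simp

lemma H_hom_scales_distances:
  assumes "k < n" "n + 2 \<le> 2 * k" "even k" "n * k' = n' * k" and hom: "H_hom n k n' k' f"
  shows "\<exists>t. n' = n * t \<and> k' = k * t \<and>
    (\<forall>x\<in>H_verts n. \<forall>y\<in>H_verts n. card (sym_diff (f x) (f y)) = t * card (sym_diff x y))"
proof -
  obtain idx where idx: "\<And>j. j < n' \<Longrightarrow> idx j < n \<and>
      (\<forall>x\<in>H_verts n. \<forall>y\<in>H_verts n. j \<in> sym_diff (f x) (f y) \<longleftrightarrow> idx j \<in> sym_diff x y)"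
    using hom_coordinate_dictator[OF assms] by metis
  define m where "m i = card {j\<in>{..<n'}. idx j = i}" for i
  have dist: "card (sym_diff (f x) (f y)) = sum m (sym_diff x y)"
    if "x \<in> H_verts n" "y \<in> H_verts n" for x y
  proof (unfold m_def, rule card_sym_diff_eq_sum_fibres)
    show "f x \<subseteq> {..<n'}" "f y \<subseteq> {..<n'}" using hom that by (auto simp: H_hom_def H_verts_def Pi_def)
    show "finite (sym_diff x y)" using that by (auto simp: H_verts_def intro: finite_subset)
    show "j \<in> sym_diff (f x) (f y) \<longleftrightarrow> idx j \<in> sym_diff x y" if "j < n'" for j
      using idx[OF that] \<open>x \<in> H_verts n\<close> \<open>y \<in> H_verts n\<close> by blast
  qed
  have sums: "sum m D = k'" if "D \<subseteq> {..<n}" "card D = k" for D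
  proof -
    have "{} \<in> H_verts n" "D \<in> H_verts n" using that \<open>even k\<close> by (auto simp: H_verts_def)
    moreover have "H_adj k {} D" using that by (simp add: H_adj_def)
    ultimately show ?thesis using hom dist[of "{}" D] by (simp add: H_hom_def H_adj_def)
  qed
  define t where "t = m 0"
  have m_const: "m i = t" if "i < n" for i
    unfolding t_def using assms that by (intro eq_if_sums_over_ksubsets_eq[OF _ _ sums]) auto
  have "n' = card {j\<in>{..<n'}. idx j \<in> {..<n}}" using idx by (simp add: Collect_conj_eq Int_absorb2 subset_eq)
  also have "\<dots> = (\<Sum>i<n. m i)" unfolding m_def by (intro card_preimage_eq_sum_fibres) auto
  also have "\<dots> = n * t" using m_const by simp
  finally have "n' = n * t" .
  moreover have "k' = k * t" using sums[of "{..<k}"] m_const assms(1) by simp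
  moreover have "sum m (sym_diff x y) = t * card (sym_diff x y)" if "x \<in> H_verts n" "y \<in> H_verts n" for x y
  proof -
    have "sym_diff x y \<subseteq> {..<n}" using that by (auto simp: H_verts_def)
    then have "sum m (sym_diff x y) = (\<Sum>i\<in>sym_diff x y. t)" using m_const by (intro sum.cong) auto
    then show ?thesis by simp
  qed
  ultimately show ?thesis using dist by auto
qed

lemma H_induced_embedding_if_scales:
  assumes f: "f \<in> H_verts n \<rightarrow> H_verts n'" and "0 < t" "k' = k * t"
    and scale: "\<forall>x\<in>H_verts n. \<forall>y\<in>H_verts n. card (sym_diff (f x) (f y)) = t * card (sym_diff x y)"
  shows "H_induced_embedding n k n' k' f"
  unfolding H_induced_embedding_def
proof (intro conjI f inj_onI ballI)
  fix x y assume xy: "x \<in> H_verts n" "y \<in> H_verts n" "f x = f y"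
  then have "card (sym_diff x y) = 0" using scale \<open>0 < t\<close> by force
  moreover have "finite (sym_diff x y)" using xy by (auto simp: H_verts_def intro: finite_subset)
  ultimately show "x = y" by auto
next
  fix x y assume "x \<in> H_verts n" "y \<in> H_verts n"
  then show "H_adj k' (f x) (f y) \<longleftrightarrow> H_adj k x y"
    using scale \<open>0 < t\<close> \<open>k' = k * t\<close> by (simp add: H_adj_def)
qed

theorem theorem5p5:
  fixes n k n' k' :: nat
  assumes "k < n" and "n < 2 * k - 1"
    and "real n / real k = real n' / real k'"
    and "even k" and "even k'"
  shows "((\<exists>f. H_hom n k n' k' f) \<longleftrightarrow> (n dvd n' \<and> k dvd k'))
    \<and> (\<forall>f. H_hom n k n' k' f \<longrightarrow> H_induced_embedding n k n' k' f)"
proof -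
  have nk: "n + 2 \<le> 2 * k" using assms(2) by simp
  have "0 < k'" using assms(1,3) nk by (cases "k' = 0") auto
  then have ratio: "n * k' = n' * k"
    using assms(1,3) nk by (simp add: field_simps flip: of_nat_mult)
  have hom_scales: "n dvd n' \<and> k dvd k' \<and> H_induced_embedding n k n' k' f" if hom: "H_hom n k n' k' f" for f
  proof -
    obtain t where t: "n' = n * t" "k' = k * t"
      and scale: "\<forall>x\<in>H_verts n. \<forall>y\<in>H_verts n. card (sym_diff (f x) (f y)) = t * card (sym_diff x y)"
      using H_hom_scales_distances[OF assms(1) nk assms(4) ratio hom] by blast
    moreover have "f \<in> H_verts n \<rightarrow> H_verts n'" using hom by (simp add: H_hom_def)
    ultimately show ?thesis using \<open>0 < k'\<close> by (auto intro: H_induced_embedding_if_scales)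
  qed
  have "\<exists>f. H_hom n k n' k' f" if dvd: "n dvd n'" "k dvd k'"
  proof -
    obtain t where "n' = n * t" using dvd(1) by (auto elim: dvdE)
    moreover from this have "k' = k * t" using ratio assms(1) by (simp add: ac_simps)
    ultimately show ?thesis using H_hom_blowup[of n k t] assms(1) by auto
  qed
  then show ?thesis using hom_scales by blast
qed

end
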